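(* For all integers $m_1,m_2\geq 1$ and every $\tau\in\mathbb{Z}$, the number \[ n_{(m_1,m_2)}(\tau)=\frac{1}{m_1+m_2}\sum_{d\mid m_1,\ d\mid m_2}\mu(d)\,(-1)^{(m_1+m_2)(\tau+1)/d}\binom{(m_1\tau+m_1)/d-1}{m_1/d}\binom{(m_2\tau+m_2)/d}{m_2/d} \] is an integer. *)

theory Defs
  imports Complex_Main "HOL-Computational_Algebra.Squarefree"
begin

definition moebius_mu :: "nat \<Rightarrow> int" where
  "moebius_mu d = (if squarefree d then (-1) ^ card (prime_factors d) else 0)"

end

theory Submission
  imports Defs "HOL-Number_Theory.Cong"
begin

text \<open>Write \<open>t = \<tau> + 1\<close>, \<open>a = m\<^sub>1 / d\<close>, \<open>b = m\<^sub>2 / d\<close>. The summand vanishes for \<open>t \<in> {0, 1}\<close>;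
  for \<open>t \<ge> 2\<close>, and for \<open>t \<le> -1\<close> after reflecting the upper arguments of the binomial
  coefficients, it equals \<open>g(a, b) = (-1)\<^bsup>(a+b)T\<^esup> C(aT - 1, a) C(bT, b)\<close> for some natural
  \<open>T \<ge> 2\<close>. So it suffices that every prime power \<open>p\<^sup>N\<close> dividing \<open>m\<^sub>1 + m\<^sub>2\<close> divides
  \<open>\<Sum>\<^sub>d \<mu>(d) g(m\<^sub>1/d, m\<^sub>2/d)\<close>.

  If \<open>p\<close> does not divide \<open>m\<^sub>1\<close>, then \<open>p\<^sup>N\<close> divides each term: the base-\<open>p\<close> additions
  \<open>a + (aT - 1 - a)\<close> and \<open>b + (bT - b)\<close> together carry at each of the lowest \<open>N\<close> digits,
  so Kummer's theorem applies. If \<open>p\<close> divides \<open>m\<^sub>1\<close> and \<open>m\<^sub>2\<close>, the nonzero terms pair off as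
  \<open>d\<close>, \<open>p d\<close> with opposite signs, and \<open>g(pA, pB) \<equiv> g(A, B) (mod p\<^sup>N)\<close> whenever
  \<open>p\<^sup>N | p(A + B)\<close>: splitting factorials into their parts prime to \<open>p\<close> and powers of \<open>p\<close>
  reduces this to a congruence between products of integers prime to \<open>p\<close>, which follows from
  the reflection \<open>i \<mapsto> KM - i\<close> modulo \<open>M = p\<^sup>N\<close>.\<close>

section \<open>The factorial with multiples of \<open>p\<close> removed\<close>

definition pfree_fact :: "nat \<Rightarrow> nat \<Rightarrow> nat" where
  "pfree_fact p m = (\<Prod>i | i \<le> m \<and> \<not> p dvd i. i)"

lemma pfree_fact_0 [simp]: "pfree_fact p 0 = 1"
  unfolding pfree_fact_def by (simp add: Collect_conv_if)

lemma pfree_fact_Suc: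
  "pfree_fact p (Suc m) = pfree_fact p m * (if p dvd Suc m then 1 else Suc m)"
proof (cases "p dvd Suc m")
  case True
  then have "{i. i \<le> Suc m \<and> \<not> p dvd i} = {i. i \<le> m \<and> \<not> p dvd i}"
    by (auto simp: le_Suc_eq)
  then show ?thesis using True unfolding pfree_fact_def by simp
next
  case False
  then have "{i. i \<le> Suc m \<and> \<not> p dvd i} = insert (Suc m) {i. i \<le> m \<and> \<not> p dvd i}"
    by (auto simp: le_Suc_eq)
  then show ?thesis using False unfolding pfree_fact_def by (simp add: mult.commute)
qed

lemma prime_not_dvd_pfree_fact: "prime p \<Longrightarrow> \<not> p dvd pfree_fact p m"
  by (induction m) (auto simp: pfree_fact_Suc prime_dvd_mult_iff prime_gt_1_nat)

lemma coprime_pfree_fact: "prime p \<Longrightarrow> coprime (pfree_fact p m) p"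
  using prime_not_dvd_pfree_fact by (simp add: prime_imp_coprime coprime_commute)

lemma div_mult_pred:
  fixes p Z :: nat
  assumes "0 < p" "0 < Z"
  shows "(p * Z - 1) div p = Z - 1"
proof -
  have "p * Z - 1 = p * (Z - 1) + (p - 1)" using assms by (cases Z) (auto simp: algebra_simps)
  then show ?thesis using assms
    by (metis add_cancel_left_right diff_less div_less div_mult_self4
        less_numeral_extra(1) not_gr_zero)
qed

lemma fact_eq_pfree_fact:
  assumes "0 < p"
  shows "fact m = pfree_fact p m * p ^ (m div p) * fact (m div p)"
proof (induction m)
  case 0 then show ?case by simp
next
  case (Suc m)
  show ?case
  proof (cases "p dvd Suc m")
    case True
    then obtain c where c: "Suc m = p * c" by blast
    with assms have c0: "0 < c" by (cases c) auto
    have "m = p * c - 1" using c by simp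
    then have "m div p = c - 1" using div_mult_pred[OF assms c0] by simp
    moreover have "Suc m div p = c" using c assms by simp
    moreover have "fact c = c * fact (c - 1)" "p ^ c = p * p ^ (c - 1)"
      using c0 by (cases c; simp)+
    moreover have "fact (Suc m) = Suc m * fact m" by simp
    moreover have "pfree_fact p (Suc m) = pfree_fact p m" using True by (simp add: pfree_fact_Suc)
    ultimately show ?thesis using Suc.IH c by (simp add: algebra_simps)
  next
    case False
    then have "Suc m div p = m div p" by (simp add: div_Suc dvd_eq_mod_eq_0)
    then show ?thesis using Suc.IH False by (simp add: pfree_fact_Suc algebra_simps)
  qed
qed

lemma fact_mult_eq_pfree_fact:
  "0 < p \<Longrightarrow> fact (p * Z) = pfree_fact p (p * Z) * p ^ Z * fact Z"
  using fact_eq_pfree_fact[of p "p * Z"] by simp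

lemma fact_pred_mult_eq_pfree_fact:
  assumes "0 < p" "0 < Z"
  shows "fact (p * Z - 1) = pfree_fact p (p * Z) * p ^ (Z - 1) * fact (Z - 1)"
proof -
  have "(p * Z - 1) div p = Z - 1" using div_mult_pred[OF assms] .
  moreover have "pfree_fact p (p * Z) = pfree_fact p (p * Z - 1)"
    using pfree_fact_Suc[of p "p * Z - 1"] assms by simp
  ultimately show ?thesis using fact_eq_pfree_fact[of p "p * Z - 1"] assms by simp
qed

lemma binomial_mult_pfree_fact:
  assumes p: "0 < p" and YX: "Y \<le> X"
  shows "(p * X choose (p * Y)) * pfree_fact p (p * Y) * pfree_fact p (p * (X - Y))
       = (X choose Y) * pfree_fact p (p * X)"
proof -
  define c where "c = p ^ X * fact Y * fact (X - Y)"
  have c0: "c \<noteq> 0" unfolding c_def using p by simp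
  have pX: "p ^ X = p ^ Y * p ^ (X - Y)" using YX by (simp flip: power_add)
  have "c * ((p * X choose (p * Y)) * pfree_fact p (p * Y) * pfree_fact p (p * (X - Y)))
      = fact (p * Y) * fact (p * (X - Y)) * (p * X choose (p * Y))"
    unfolding c_def pX fact_mult_eq_pfree_fact[OF p] by (simp only: ac_simps)
  also have "\<dots> = fact (p * X)"
    using binomial_fact_lemma[of "p * Y" "p * X"] YX by (simp add: diff_mult_distrib2)
  also have "\<dots> = c * ((X choose Y) * pfree_fact p (p * X))"
    unfolding c_def fact_mult_eq_pfree_fact[OF p] binomial_fact_lemma[OF YX, symmetric]
    by (simp only: ac_simps)
  finally show ?thesis using c0 by simp
qed

lemma binomial_pred_mult_pfree_fact:
  assumes p: "0 < p" and YX: "Y < X"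
  shows "(p * X - 1 choose (p * Y)) * pfree_fact p (p * Y) * pfree_fact p (p * (X - Y))
       = (X - 1 choose Y) * pfree_fact p (p * X)"
proof -
  define c where "c = p ^ (X - 1) * fact Y * fact (X - Y - 1)"
  have c0: "c \<noteq> 0" unfolding c_def using p by simp
  have pX: "p ^ (X - 1) = p ^ Y * p ^ (X - Y - 1)" using YX by (simp flip: power_add)
  have XY: "X - 1 - Y = X - Y - 1" "p * X - 1 - p * Y = p * (X - Y) - 1"
    by (simp_all add: diff_mult_distrib2)
  have "p * Y < p * X" using p YX by simp
  then have "p * Y \<le> p * X - 1" by linarith
  then have "c * ((p * X - 1 choose (p * Y)) * pfree_fact p (p * Y) * pfree_fact p (p * (X - Y)))
      = fact (p * Y) * fact (p * X - 1 - p * Y) * (p * X - 1 choose (p * Y))"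
    unfolding c_def pX XY fact_mult_eq_pfree_fact[OF p]
      fact_pred_mult_eq_pfree_fact[OF p zero_less_diff[THEN iffD2, OF YX]]
    by (simp only: ac_simps)
  also have "\<dots> = fact (p * X - 1)"
    using binomial_fact_lemma[of "p * Y" "p * X - 1"] \<open>p * Y \<le> p * X - 1\<close> by simp
  also have "\<dots> = c * ((X - 1 choose Y) * pfree_fact p (p * X))"
  proof -
    have "fact Y * fact (X - Y - 1) * (X - 1 choose Y) = fact (X - 1)"
      using binomial_fact_lemma[of Y "X - 1"] YX XY(1) by simp
    then show ?thesis
      unfolding c_def fact_pred_mult_eq_pfree_fact[OF p order.strict_trans1[OF le0 YX]]
      by (simp add: ac_simps)
  qed
  finally show ?thesis using c0 by simp
qed


lemma pfree_fact_add_cong: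
  assumes "p dvd M"
  shows "[int (pfree_fact p (x + M)) = int (pfree_fact p x) * int (pfree_fact p M)] (mod int M)"
proof (induction x)
  case 0 then show ?case by simp
next
  case (Suc x)
  have "p dvd Suc (x + M) \<longleftrightarrow> p dvd Suc x"
    using assms by (metis add_Suc dvd_add_left_iff)
  then have Q: "pfree_fact p (Suc x + M) = pfree_fact p (x + M) * (if p dvd Suc x then 1 else Suc x + M)"
    using pfree_fact_Suc[of p "x + M"] by simp
  have "[int (if p dvd Suc x then 1 else Suc x + M) = int (if p dvd Suc x then 1 else Suc x)] (mod int M)"
  proof -
    have "[int (Suc x) + int M = int (Suc x) + 0] (mod int M)"
      by (intro cong_add cong_refl) (simp add: cong_0_iff)
    then show ?thesis by (simp add: add.assoc)
  qed
  from cong_mult[OF Suc.IH this] show ?case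
    unfolding Q pfree_fact_Suc[of p x] by (simp add: ac_simps)
qed

lemma pfree_fact_mult_cong:
  assumes "p dvd M"
  shows "[int (pfree_fact p (K * M)) = int (pfree_fact p M) ^ K] (mod int M)"
proof (induction K)
  case 0 then show ?case by simp
next
  case (Suc K)
  have "[int (pfree_fact p (K * M + M)) = int (pfree_fact p (K * M)) * int (pfree_fact p M)] (mod int M)"
    by (rule pfree_fact_add_cong[OF assms])
  moreover have "[int (pfree_fact p (K * M)) * int (pfree_fact p M)
                = int (pfree_fact p M) ^ K * int (pfree_fact p M)] (mod int M)"
    by (rule cong_scalar_right[OF Suc.IH])
  ultimately show ?case by (simp add: add.commute cong_trans mult.commute)
qed

definition pfree_neg_prod :: "nat \<Rightarrow> nat \<Rightarrow> int" where
  "pfree_neg_prod p y = (\<Prod>i | i < y \<and> \<not> p dvd i. - int i)"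

lemma pfree_neg_prod_Suc:
  "pfree_neg_prod p (Suc y) = pfree_neg_prod p y * (if p dvd y then 1 else - int y)"
proof (cases "p dvd y")
  case True
  then have "{i. i < Suc y \<and> \<not> p dvd i} = {i. i < y \<and> \<not> p dvd i}"
    by (auto simp: less_Suc_eq)
  then show ?thesis using True unfolding pfree_neg_prod_def by simp
next
  case False
  then have "{i. i < Suc y \<and> \<not> p dvd i} = insert y {i. i < y \<and> \<not> p dvd i}"
    by (auto simp: less_Suc_eq)
  then show ?thesis using False unfolding pfree_neg_prod_def by (simp add: mult.commute)
qed

text \<open>Wilson-type reflection: modulo \<open>M\<close>, the factors \<open>K M - i\<close> of the top part of
  \<open>pfree_fact p (K * M)\<close> are congruent to \<open>- i\<close>.\<close>

lemma pfree_fact_reflect_cong: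
  assumes pM: "p dvd M"
  shows "y \<le> K * M \<Longrightarrow>
    [int (pfree_fact p (K * M - y)) * pfree_neg_prod p y = int (pfree_fact p (K * M))] (mod int M)"
proof (induction y)
  case 0 then show ?case by (simp add: pfree_neg_prod_def)
next
  case (Suc y)
  define w where "w = K * M - y"
  have w: "w = Suc (K * M - Suc y)" "w + y = K * M" using Suc.prems unfolding w_def by simp_all
  have "p dvd w \<longleftrightarrow> p dvd y" using w(2) pM by (metis dvd_add_left_iff dvd_add_right_iff dvd_mult)
  then have Qw: "pfree_fact p w = pfree_fact p (K * M - Suc y) * (if p dvd y then 1 else w)"
    using pfree_fact_Suc[of p "K * M - Suc y"] w(1) by simp
  have IH: "[int (pfree_fact p w) * pfree_neg_prod p y = int (pfree_fact p (K * M))] (mod int M)"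
    using Suc unfolding w_def by simp
  have "int w + int y = int K * int M" using w(2) by (metis of_nat_add of_nat_mult)
  then have "int w - (- int y) = int M * int K" by (simp add: algebra_simps)
  then have "[int w = - int y] (mod int M)" by (simp add: cong_iff_dvd_diff)
  then have wy: "[- int y = int w] (mod int M)" by (rule cong_sym)
  show ?case
  proof (cases "p dvd y")
    case True
    then show ?thesis using IH Qw by (simp add: pfree_neg_prod_Suc)
  next
    case False
    have "[int (pfree_fact p (K * M - Suc y)) * pfree_neg_prod p y * (- int y)
         = int (pfree_fact p (K * M - Suc y)) * pfree_neg_prod p y * int w] (mod int M)"
      by (rule cong_scalar_left[OF wy])
    then have "[int (pfree_fact p (K * M - Suc y)) * pfree_neg_prod p (Suc y)
              = int (pfree_fact p w) * pfree_neg_prod p y] (mod int M)"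
      using False Qw by (simp add: pfree_neg_prod_Suc ac_simps)
    then show ?thesis using IH by (rule cong_trans)
  qed
qed

lemma card_nondvd_atMost:
  assumes "0 < (p::nat)"
  shows "card {i. i \<le> y \<and> \<not> p dvd i} = y - y div p"
proof (induction y)
  case 0 then show ?case by (simp add: Collect_conv_if)
next
  case (Suc y)
  show ?case
  proof (cases "p dvd Suc y")
    case True
    then have "{i. i \<le> Suc y \<and> \<not> p dvd i} = {i. i \<le> y \<and> \<not> p dvd i}"
      by (auto simp: le_Suc_eq)
    moreover have "Suc y div p = Suc (y div p)" using True by (simp add: div_Suc dvd_eq_mod_eq_0)
    ultimately show ?thesis using Suc.IH by simp
  next
    case False
    then have "{i. i \<le> Suc y \<and> \<not> p dvd i} = insert (Suc y) {i. i \<le> y \<and> \<not> p dvd i}"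
      by (auto simp: le_Suc_eq)
    moreover have "Suc y div p = y div p" using False by (simp add: div_Suc dvd_eq_mod_eq_0)
    ultimately show ?thesis using Suc.IH by (simp add: Suc_diff_le)
  qed
qed

lemma pfree_neg_prod_eq:
  assumes "0 < p" "p dvd y"
  shows "pfree_neg_prod p y = (-1) ^ (y - y div p) * int (pfree_fact p y)"
proof -
  have "{i. i < y \<and> \<not> p dvd i} = {i. i \<le> y \<and> \<not> p dvd i}"
    using assms(2) by (auto simp: order.order_iff_strict)
  then have "pfree_neg_prod p y = (\<Prod>i | i \<le> y \<and> \<not> p dvd i. (-1) * int i)"
    unfolding pfree_neg_prod_def by simp
  also have "\<dots> = (-1) ^ card {i. i \<le> y \<and> \<not> p dvd i} * (\<Prod>i | i \<le> y \<and> \<not> p dvd i. int i)"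
    by (simp only: prod.distrib prod_constant)
  finally show ?thesis unfolding card_nondvd_atMost[OF assms(1)] pfree_fact_def by simp
qed

lemma pfree_fact_complement_cong:
  assumes "0 < p" "p dvd M" "p dvd y" "y + z = K * M"
  shows "[int (pfree_fact p z) * int (pfree_fact p y) * (-1) ^ (y - y div p)
        = int (pfree_fact p M) ^ K] (mod int M)"
proof -
  have "[int (pfree_fact p (K * M - y)) * pfree_neg_prod p y = int (pfree_fact p (K * M))] (mod int M)"
    using assms(2,4) by (intro pfree_fact_reflect_cong) simp_all
  moreover have "K * M - y = z" using assms(4) by simp
  ultimately have "[int (pfree_fact p z) * int (pfree_fact p y) * (-1) ^ (y - y div p)
            = int (pfree_fact p (K * M))] (mod int M)"
    using assms(4) pfree_neg_prod_eq[OF assms(1,3)] by (simp add: ac_simps)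
  then show ?thesis using pfree_fact_mult_cong[OF assms(2)] by (rule cong_trans)
qed

lemma nondvd_count_add:
  fixes p x y :: nat
  assumes "0 < p" "p dvd x" "p dvd y"
  shows "(x + y) - (x + y) div p = (x - x div p) + (y - y div p)"
proof -
  have e: "\<And>Z. p * Z - p * Z div p = (p - 1) * Z" using assms(1) by (simp add: diff_mult_distrib)
  from assms(2,3) obtain k l where "x = p * k" "y = p * l" by (auto elim!: dvdE)
  then show ?thesis using e[of k] e[of l] e[of "k + l"] by (simp add: add_mult_distrib2)
qed

lemma pfree_fact_product_cong:
  assumes p: "0 < p" and pM: "p dvd M" and pA: "p dvd A" and AB: "A + B = k * M" and T: "1 \<le> T"
  shows "[int (pfree_fact p (A * T)) * int (pfree_fact p (B * T))
        = int (pfree_fact p A) * int (pfree_fact p (A * (T - 1)))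
          * int (pfree_fact p B) * int (pfree_fact p (B * (T - 1)))] (mod int M)"
proof -
  define s :: "nat \<Rightarrow> int" where "s y = (-1) ^ (y - y div p)" for y
  define Q where "Q y = int (pfree_fact p y)" for y
  have split: "Z * T = Z + Z * (T - 1)" for Z :: nat using T by (cases T) auto
  have "A * T - A * T div p = (A - A div p) + (A * (T - 1) - A * (T - 1) div p)"
    using nondvd_count_add[OF p pA dvd_mult2[OF pA, of "T - 1"]] by (simp only: split[of A])
  then have s_split: "s (A * T) = s A * s (A * (T - 1))"
    unfolding s_def by (simp only: power_add)
  have s_sq: "s y * s y = 1" for y unfolding s_def by (simp flip: power_add)
  have complement: "[Q (B * S) * Q (A * S) * s (A * S) = Q M ^ (k * S)] (mod int M)" for S
    unfolding s_def Q_def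
  proof (rule pfree_fact_complement_cong[OF p pM])
    show "p dvd A * S" using pA by simp
    show "A * S + B * S = k * S * M" using AB by (metis add_mult_distrib mult.commute mult.left_commute)
  qed
  define X1 where "X1 = Q (B * T) * Q (A * T)"
  define X2 where "X2 = Q B * Q A"
  define X3 where "X3 = Q (B * (T - 1)) * Q (A * (T - 1))"
  have "[(X2 * s A) * (X3 * s (A * (T - 1))) = Q M ^ k * Q M ^ (k * (T - 1))] (mod int M)"
    unfolding X2_def X3_def using cong_mult[OF complement[of 1] complement[of "T - 1"]] by simp
  also have "Q M ^ k * Q M ^ (k * (T - 1)) = Q M ^ (k * T)"
    unfolding split[of k] by (simp add: power_add)
  finally have "[X1 * s (A * T) = (X2 * s A) * (X3 * s (A * (T - 1)))] (mod int M)"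
    using complement[of T] unfolding X1_def by (metis cong_sym cong_trans)
  then have "[X1 * s (A * T) * s (A * T)
            = (X2 * s A) * (X3 * s (A * (T - 1))) * s (A * T)] (mod int M)"
    by (rule cong_scalar_right)
  moreover have "X1 * s (A * T) * s (A * T) = X1" using s_sq by (simp add: mult.assoc)
  moreover have "(X2 * s A) * (X3 * s (A * (T - 1))) * s (A * T) = X2 * X3"
  proof -
    have "(X2 * s A) * (X3 * s (A * (T - 1))) * s (A * T) = X2 * X3 * (s (A * T) * s (A * T))"
      unfolding s_split by (simp add: ac_simps)
    then show ?thesis using s_sq by simp
  qed
  ultimately have "[X1 = X2 * X3] (mod int M)" by metis
  then show ?thesis unfolding X1_def X2_def X3_def Q_def by (simp add: ac_simps)
qed


definition binom_pair :: "nat \<Rightarrow> nat \<Rightarrow> nat \<Rightarrow> nat" where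
  "binom_pair T a b = (a * T - 1 choose a) * (b * T choose b)"

lemma binom_pair_cong:
  assumes p: "prime p" and N: "0 < N" and AB: "p ^ N dvd p * A + p * B"
    and A0: "0 < A" and T: "2 \<le> T"
  shows "[int (binom_pair T (p * A) (p * B)) = int (binom_pair T A B)] (mod int (p ^ N))"
proof -
  have p0: "0 < p" using p prime_gt_0_nat by blast
  have pM: "p dvd p ^ N" using N by simp
  obtain k where "p * A + p * B = p ^ N * k" using AB by (elim dvdE)
  then have k: "p * A + p * B = k * p ^ N" by (simp only: mult.commute)
  have r: "p * (Z * T) = p * Z * T" "p * (Z * T - Z) = p * Z * (T - 1)" for Z
    by (simp_all add: diff_mult_distrib2 ac_simps)
  have h1: "(p * A * T - 1 choose (p * A)) * pfree_fact p (p * A) * pfree_fact p (p * A * (T - 1))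
          = (A * T - 1 choose A) * pfree_fact p (p * A * T)"
    using binomial_pred_mult_pfree_fact[OF p0, of A "A * T"] A0 T unfolding r by simp
  have h2: "(p * B * T choose (p * B)) * pfree_fact p (p * B) * pfree_fact p (p * B * (T - 1))
          = (B * T choose B) * pfree_fact p (p * B * T)"
    using binomial_mult_pfree_fact[OF p0, of B "B * T"] T unfolding r by simp
  define D where "D = pfree_fact p (p * A) * pfree_fact p (p * A * (T - 1))
                    * pfree_fact p (p * B) * pfree_fact p (p * B * (T - 1))"
  define U where "U = pfree_fact p (p * A * T) * pfree_fact p (p * B * T)"
  have "binom_pair T (p * A) (p * B) * D = binom_pair T A B * U"
    using arg_cong2[OF h1 h2, of "(*)"] unfolding binom_pair_def D_def U_def by (simp add: ac_simps)
  then have "int (binom_pair T (p * A) (p * B)) * int D = int (binom_pair T A B) * int U"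
    by (metis of_nat_mult)
  moreover have "[int U = int D] (mod int (p ^ N))"
    using pfree_fact_product_cong[OF p0 pM _ k, of T] T unfolding U_def D_def by simp
  ultimately have "[int (binom_pair T (p * A) (p * B)) * int D
                  = int (binom_pair T A B) * int D] (mod int (p ^ N))"
    by (metis cong_scalar_left)
  moreover have "coprime (int D) (int (p ^ N))"
    unfolding D_def using coprime_pfree_fact[OF p] by simp
  ultimately show ?thesis using cong_mult_rcancel by blast
qed

lemma multiplicity_fact_div:
  assumes p: "prime (p::nat)"
  shows "multiplicity p (fact m :: nat) = m div p + multiplicity p (fact (m div p) :: nat)"
proof -
  have p0: "0 < p" using p prime_gt_0_nat by blast
  have Q: "\<not> p dvd pfree_fact p m" "pfree_fact p m \<noteq> 0"
    using prime_not_dvd_pfree_fact[OF p, of m] by (metis dvd_0_right)+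
  have "multiplicity p (fact m :: nat) = multiplicity p (pfree_fact p m * p ^ (m div p) * fact (m div p))"
    using fact_eq_pfree_fact[OF p0, of m] by simp
  also have "\<dots> = m div p + multiplicity p (fact (m div p) :: nat)"
    using p Q p0 by (simp add: prime_elem_multiplicity_mult_distrib not_dvd_imp_multiplicity_0)
  finally show ?thesis .
qed

lemma multiplicity_fact_levels:
  assumes "prime (p::nat)"
  shows "multiplicity p (fact m :: nat)
       = (\<Sum>i\<in>{1..N}. m div p ^ i) + multiplicity p (fact (m div p ^ N) :: nat)"
proof (induction N)
  case 0 then show ?case by simp
next
  case (Suc N)
  have "multiplicity p (fact (m div p ^ N) :: nat)
      = m div p ^ Suc N + multiplicity p (fact (m div p ^ Suc N) :: nat)"
    using multiplicity_fact_div[OF assms, of "m div p ^ N"]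
    by (simp add: div_mult2_eq power_Suc2 del: power_Suc)
  then show ?case using Suc.IH by simp
qed

lemma fact_mult_fact_dvd_fact: "(fact a * fact b :: nat) dvd fact (a + b)"
  using binomial_fact_lemma[of a "a + b"] by (metis add_diff_cancel_left' dvd_triv_left le_add1)

text \<open>Kummer's theorem, in the direction needed: every carry in the base-\<open>p\<close> addition
  of \<open>k\<close> and \<open>m - k\<close> (at digit positions \<open>1..N\<close>) contributes a factor \<open>p\<close> to \<open>m choose k\<close>.\<close>

lemma carries_le_multiplicity_binomial:
  assumes p: "prime (p::nat)" and km: "k \<le> m"
  shows "(\<Sum>i\<in>{1..N}. (k mod p ^ i + (m - k) mod p ^ i) div p ^ i) \<le> multiplicity p (m choose k)"
proof -
  define F where "F x = multiplicity p (fact x :: nat)" for x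
  define z where "z = m - k"
  have mz: "m = k + z" using km unfolding z_def by simp
  have "fact k * fact z * (m choose k) = (fact m :: nat)"
    unfolding z_def using km by (rule binomial_fact_lemma)
  then have "F m = F k + F z + multiplicity p (m choose k)"
    unfolding F_def using p km by (metis prime_elem_multiplicity_mult_distrib fact_nonzero
        mult_eq_0_iff prime_imp_prime_elem zero_less_binomial_iff less_numeral_extra(3))
  moreover have lev: "F x = (\<Sum>i\<in>{1..N}. x div p ^ i) + F (x div p ^ N)" for x
    unfolding F_def by (rule multiplicity_fact_levels[OF p])
  moreover have "(\<Sum>i\<in>{1..N}. m div p ^ i) = (\<Sum>i\<in>{1..N}. k div p ^ i) + (\<Sum>i\<in>{1..N}. z div p ^ i)
        + (\<Sum>i\<in>{1..N}. (k mod p ^ i + z mod p ^ i) div p ^ i)"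
    unfolding mz div_add1_eq[of k z] by (simp only: sum.distrib)
  moreover have "F (k div p ^ N) + F (z div p ^ N) \<le> F (m div p ^ N)"
  proof -
    have "k div p ^ N + z div p ^ N \<le> m div p ^ N" unfolding mz div_add1_eq[of k z] by simp
    then have "(fact (k div p ^ N) * fact (z div p ^ N) :: nat) dvd fact (m div p ^ N)"
      using dvd_trans[OF fact_mult_fact_dvd_fact fact_dvd] by blast
    then have "multiplicity p (fact (k div p ^ N) * fact (z div p ^ N) :: nat) \<le> F (m div p ^ N)"
      unfolding F_def by (intro dvd_imp_multiplicity_le) auto
    then show ?thesis unfolding F_def using p by (simp add: prime_elem_multiplicity_mult_distrib)
  qed
  ultimately show ?thesis unfolding z_def[symmetric] using lev[of m] lev[of k] lev[of z] by linarith
qed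

lemma dvd_less_double_imp_eq:
  fixes q s :: nat
  assumes "q dvd s" "0 < s" "s < 2 * q"
  shows "s = q"
proof -
  obtain c where "s = q * c" using assms(1) by blast
  with assms(2,3) have "0 < c" "c < 2" by auto
  then show ?thesis using \<open>s = q * c\<close> by (simp add: numeral_2_eq_2 less_Suc_eq)
qed

text \<open>If \<open>q\<close> divides \<open>a + b\<close> but not \<open>a\<close>, the two additions behind \<open>binom_pair\<close>, namely
  \<open>a + (a T - 1 - a)\<close> and \<open>b + (b T - b)\<close>, cannot both be carry-free modulo \<open>q\<close>:
  their four residues sum to \<open>2 q - 1\<close>.\<close>

lemma carry_binom_pair:
  fixes q a b T :: nat
  assumes q: "0 < q" and qab: "q dvd a + b" and qa: "\<not> q dvd a" and T: "2 \<le> T"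
  shows "1 \<le> (a mod q + (a * T - 1 - a) mod q) div q + (b mod q + (b * T - b) mod q) div q"
proof -
  define x where "x = a mod q"
  define x' where "x' = b mod q"
  define y where "y = (a * T - 1 - a) mod q"
  define y' where "y' = (b * T - b) mod q"
  have a0: "0 < a" using qa by (cases a) auto
  have bounds: "0 < x" "x < q" "x' < q" "y < q" "y' < q"
    unfolding x_def x'_def y_def y'_def using q qa by (auto simp: dvd_eq_mod_eq_0)
  have "q dvd x + x'" unfolding x_def x'_def using qab by (simp add: mod_add_eq dvd_eq_mod_eq_0)
  then have sx: "x + x' = q" using bounds by (intro dvd_less_double_imp_eq) auto
  have "a * 2 \<le> a * T" using T by simp
  then have "a * T - 1 - a + 1 = a * T - a" using a0 by linarith
  then have "a * T - 1 - a + 1 = a * (T - 1)" by (simp add: diff_mult_distrib2)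
  moreover have "b * T - b = b * (T - 1)" by (simp add: diff_mult_distrib2)
  ultimately have "(a * T - 1 - a) + 1 + (b * T - b) = (a + b) * (T - 1)"
    by (simp only: add_mult_distrib)
  then have "q dvd (a * T - 1 - a) + 1 + (b * T - b)" using qab by simp
  moreover have "(y + 1 + y') mod q = ((a * T - 1 - a) + 1 + (b * T - b)) mod q"
    unfolding y_def y'_def by (metis mod_add_eq mod_add_left_eq mod_add_right_eq)
  ultimately have "q dvd y + 1 + y'" by (simp add: dvd_eq_mod_eq_0)
  then have sy: "y + 1 + y' = q" using bounds by (intro dvd_less_double_imp_eq) auto
  have "q \<le> x + y \<or> q \<le> x' + y'" using sx sy by linarith
  then have "1 \<le> (x + y) div q \<or> 1 \<le> (x' + y') div q"
    using q by (metis div_le_mono div_self less_not_refl2)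
  then show ?thesis unfolding x_def x'_def y_def y'_def by linarith
qed

lemma prime_power_dvd_binom_pair:
  assumes p: "prime (p::nat)" and pN: "p ^ N dvd a + b" and pa: "\<not> p dvd a" and T: "2 \<le> T"
  shows "p ^ N dvd binom_pair T a b"
proof -
  have "0 < a" using pa by (cases a) auto
  moreover have "a * 2 \<le> a * T" using T by simp
  ultimately have ka: "a \<le> a * T - 1" by linarith
  have kb: "b \<le> b * T" using T by simp
  define G where "G i = (a mod p ^ i + (a * T - 1 - a) mod p ^ i) div p ^ i
                      + (b mod p ^ i + (b * T - b) mod p ^ i) div p ^ i" for i
  have "1 \<le> G i" if "i \<in> {1..N}" for i
    unfolding G_def
  proof (rule carry_binom_pair)
    show "0 < p ^ i" using p prime_gt_0_nat by simp
    show "p ^ i dvd a + b" using that pN le_imp_power_dvd[of i N p] by (auto intro: dvd_trans)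
    have "p dvd p ^ i" using that by (simp add: dvd_power)
    then show "\<not> p ^ i dvd a" using pa by (auto intro: dvd_trans)
  qed fact
  then have "N \<le> (\<Sum>i\<in>{1..N}. G i)" using sum_mono[of "{1..N}" "\<lambda>_. 1" G] by simp
  also have "\<dots> \<le> multiplicity p (a * T - 1 choose a) + multiplicity p (b * T choose b)"
    unfolding G_def sum.distrib
    using carries_le_multiplicity_binomial[OF p ka] carries_le_multiplicity_binomial[OF p kb]
    by (intro add_mono) simp_all
  also have "\<dots> = multiplicity p (binom_pair T a b)"
  proof -
    have "(a * T - 1 choose a) \<noteq> 0" "(b * T choose b) \<noteq> 0"
      using ka kb by (simp_all only: binomial_eq_0_iff not_less)
    then show ?thesis
      unfolding binom_pair_def using p by (simp add: prime_elem_multiplicity_mult_distrib)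
  qed
  finally show ?thesis by (rule multiplicity_dvd')
qed

definition signed_binom_pair :: "nat \<Rightarrow> nat \<Rightarrow> nat \<Rightarrow> int" where
  "signed_binom_pair T a b = (-1) ^ ((a + b) * T) * int (binom_pair T a b)"

lemma prime_power_dvd_neg_one_power_diff:
  assumes p: "prime (p::nat)" and pN: "p ^ N dvd p * c"
  shows "int (p ^ N) dvd (-1) ^ (p * c * T) - (-1) ^ (c * T)"
proof (cases "p = 2")
  case False
  then have "odd p" using p prime_ge_2_nat prime_odd_nat by (metis le_neq_implies_less)
  then have "even (p * c * T) \<longleftrightarrow> even (c * T)" by simp
  then have "(-1::int) ^ (p * c * T) = (-1) ^ (c * T)" by (simp add: minus_one_power_iff)
  then show ?thesis by simp
next
  case p2: True
  show ?thesis
  proof (cases "N \<le> 1")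
    case True
    then have "int (p ^ N) dvd 2" using p2 by (cases N) auto
    also have "(2::int) dvd (-1) ^ (p * c * T) - (-1) ^ (c * T)"
      by (cases "even (p * c * T)"; cases "even (c * T)") auto
    finally show ?thesis .
  next
    case False
    then have "p ^ 2 dvd p ^ N" by (intro le_imp_power_dvd) simp
    then have "2 * 2 dvd 2 * c" using pN p2 by (metis dvd_trans power2_eq_square)
    then have "even c" by simp
    then show ?thesis by simp
  qed
qed

lemma signed_binom_pair_cong:
  assumes p: "prime p" and pN: "p ^ N dvd p * A + p * B" and A0: "0 < A" and T: "2 \<le> T"
  shows "int (p ^ N) dvd signed_binom_pair T (p * A) (p * B) - signed_binom_pair T A B"
proof -
  define s where "s = (-1::int) ^ ((p * A + p * B) * T)"
  define s' where "s' = (-1::int) ^ ((A + B) * T)"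
  define f where "f = int (binom_pair T (p * A) (p * B))"
  define f' where "f' = int (binom_pair T A B)"
  have "int (p ^ N) dvd f - f'"
  proof (cases "N = 0")
    case False
    then show ?thesis unfolding f_def f'_def
      using binom_pair_cong[OF p _ pN A0 T] by (simp add: cong_iff_dvd_diff)
  qed simp
  moreover have "int (p ^ N) dvd s - s'"
  proof -
    have "(p * A + p * B) * T = p * (A + B) * T" "p * A + p * B = p * (A + B)"
      by (simp_all only: add_mult_distrib2)
    then show ?thesis unfolding s_def s'_def
      using prime_power_dvd_neg_one_power_diff[OF p, of N "A + B" T] pN by (simp only:)
  qed
  moreover have "signed_binom_pair T (p * A) (p * B) - signed_binom_pair T A B = s * (f - f') + (s - s') * f'"
    unfolding signed_binom_pair_def s_def[symmetric] s'_def[symmetric] f_def[symmetric] f'_def[symmetric]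
    by (simp add: algebra_simps)
  ultimately show ?thesis by (metis dvd_add dvd_mult dvd_mult2)
qed


section \<open>The Moebius-weighted sum\<close>

lemma moebius_mu_prime_mult:
  assumes p: "prime (p::nat)" and pe: "\<not> p dvd e" and e0: "0 < e"
  shows "moebius_mu (p * e) = - moebius_mu e"
proof -
  have "coprime p e" using p pe by (simp add: prime_imp_coprime)
  then have sq: "squarefree (p * e) \<longleftrightarrow> squarefree e"
    using squarefree_multD(2)[of p e] squarefree_mult_coprime squarefree_prime[OF p] by blast
  have "prime_factors (p * e) = insert p (prime_factors e)"
    using prime_factors_product[of p e] p e0 by (simp add: prime_prime_factors)
  moreover have "p \<notin> prime_factors e" using pe by (auto simp: in_prime_factors_iff)
  ultimately have "card (prime_factors (p * e)) = Suc (card (prime_factors e))" by simp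
  then show ?thesis unfolding moebius_mu_def sq by simp
qed

lemma moebius_mu_eq_0_if_square_dvd:
  assumes "prime (p::nat)" "p * p dvd d"
  shows "moebius_mu d = 0"
proof -
  have "\<not> squarefree d"
    using assms by (intro not_squarefreeI[of p]) (auto simp: power2_eq_square)
  then show ?thesis unfolding moebius_mu_def by simp
qed

text \<open>When \<open>p\<close> divides both \<open>a\<close> and \<open>b\<close>, the divisors \<open>e\<close> and \<open>p e\<close> (\<open>p \<nmid> e\<close>) are the
  only ones with \<open>moebius_mu \<noteq> 0\<close>, and they carry opposite signs.\<close>

lemma moebius_sum_pair_prime:
  fixes F :: "nat \<Rightarrow> nat \<Rightarrow> int"
  assumes p: "prime p" and pa: "p dvd a" and pb: "p dvd b" and a0: "0 < a"
  shows "(\<Sum>d | d dvd a \<and> d dvd b. moebius_mu d * F (a div d) (b div d))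
       = (\<Sum>e | e dvd a \<and> e dvd b \<and> \<not> p dvd e.
            moebius_mu e * (F (a div e) (b div e) - F (a div e div p) (b div e div p)))"
proof -
  define h where "h d = moebius_mu d * F (a div d) (b div d)" for d
  define D where "D = {d. d dvd a \<and> d dvd b}"
  define D1 where "D1 = {e \<in> D. \<not> p dvd e}"
  have finD: "finite D" unfolding D_def using a0 by (auto intro: finite_subset[of _ "{..a}"] dest: dvd_imp_le)
  have p0: "0 < p" using p prime_gt_0_nat by blast
  have D1_eq: "D1 = {e. e dvd a \<and> e dvd b \<and> \<not> p dvd e}" unfolding D1_def D_def by auto
  have "sum h D = sum h D1 + sum h {d \<in> D. p dvd d}"
    unfolding D1_def using finD by (subst sum.union_disjoint[symmetric]) (auto intro: sum.cong)
  also have "sum h {d \<in> D. p dvd d} = sum h ((\<lambda>e. p * e) ` D1)"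
  proof (rule sum.mono_neutral_right)
    show "(\<lambda>e. p * e) ` D1 \<subseteq> {d \<in> D. p dvd d}"
      unfolding D1_def D_def using p pa pb
      by (auto simp: prime_imp_coprime intro: divides_mult)
    show "\<forall>d \<in> {d \<in> D. p dvd d} - (\<lambda>e. p * e) ` D1. h d = 0"
    proof
      fix d assume d: "d \<in> {d \<in> D. p dvd d} - (\<lambda>e. p * e) ` D1"
      then obtain e where e: "d = p * e" by blast
      then have "e \<in> D" using d unfolding D_def by (auto intro: dvd_trans)
      then have "p dvd e" using d e unfolding D1_def by auto
      then show "h d = 0"
        unfolding h_def using e moebius_mu_eq_0_if_square_dvd[OF p] by simp
    qed
  qed (use finD in auto)
  also have "\<dots> = (\<Sum>e\<in>D1. h (p * e))"
    using p0 by (subst sum.reindex) (auto simp: inj_on_def)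
  finally have "sum h D = (\<Sum>e\<in>D1. h e + h (p * e))" by (simp add: sum.distrib)
  also have "\<dots> = (\<Sum>e\<in>D1. moebius_mu e * (F (a div e) (b div e) - F (a div e div p) (b div e div p)))"
  proof (rule sum.cong)
    fix e assume "e \<in> D1"
    then have "\<not> p dvd e" "0 < e" unfolding D1_def D_def using a0 by (auto intro!: Nat.gr0I)
    then have "moebius_mu (p * e) = - moebius_mu e" by (intro moebius_mu_prime_mult[OF p])
    moreover have "x div (p * e) = x div e div p" for x by (simp add: div_mult2_eq mult.commute)
    ultimately show "h e + h (p * e) = moebius_mu e * (F (a div e) (b div e) - F (a div e div p) (b div e div p))"
      unfolding h_def by (simp add: algebra_simps)
  qed simp
  finally show ?thesis unfolding h_def D_def D1_eq .
qed

definition moebius_binom_sum :: "nat \<Rightarrow> nat \<Rightarrow> nat \<Rightarrow> int" where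
  "moebius_binom_sum T a b =
     (\<Sum>d | d dvd a \<and> d dvd b. moebius_mu d * signed_binom_pair T (a div d) (b div d))"

lemma prime_power_dvd_div_add_div:
  assumes "prime (p::nat)" "p ^ N dvd a + b" "d dvd a" "d dvd b" "\<not> p dvd d"
  shows "p ^ N dvd a div d + b div d"
proof -
  have "a + b = d * (a div d + b div d)" using assms(3,4) by (simp add: add_mult_distrib2)
  moreover have "coprime (p ^ N) d" using assms(1,5) by (simp add: prime_imp_coprime)
  ultimately show ?thesis using assms(2) by (metis coprime_dvd_mult_right_iff)
qed

lemma prime_power_dvd_moebius_binom_sum:
  assumes p: "prime (p::nat)" and pN: "p ^ N dvd a + b" and a0: "0 < a" and T: "2 \<le> T"
  shows "int (p ^ N) dvd moebius_binom_sum T a b"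
proof (cases "p dvd a \<and> p dvd b")
  case True
  have "int (p ^ N) dvd signed_binom_pair T (a div e) (b div e)
                      - signed_binom_pair T (a div e div p) (b div e div p)"
    if e: "e dvd a" "e dvd b" "\<not> p dvd e" for e
  proof -
    have "p dvd a div e" "p dvd b div e"
      using True e p by (metis dvd_div_mult_self dvd_mult_div_cancel prime_dvd_mult_iff)+
    moreover have "0 < a div e" using e a0 by (metis dvd_div_eq_0_iff gr0I)
    moreover have "p ^ N dvd a div e + b div e" by (rule prime_power_dvd_div_add_div[OF p pN e])
    ultimately show ?thesis
      using signed_binom_pair_cong[OF p, of N "a div e div p" "b div e div p" T] T
      by (auto elim!: dvdE)
  qed
  then show ?thesis
    unfolding moebius_binom_sum_def moebius_sum_pair_prime[OF p conjunct1[OF True] conjunct2[OF True] a0]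
    by (auto intro!: dvd_sum)
next
  case False
  have "int (p ^ N) dvd signed_binom_pair T (a div d) (b div d)" if d: "d dvd a" "d dvd b" for d
  proof (cases "N = 0")
    case False
    then have "p dvd a + b" using pN by (metis dvd_power dvd_trans gr0I)
    then have pa: "\<not> p dvd a" using \<open>\<not> (p dvd a \<and> p dvd b)\<close> by (metis dvd_add_right_iff)
    then have "\<not> p dvd d" "\<not> p dvd a div d" using d by (metis dvd_trans dvd_mult dvd_mult_div_cancel)+
    then have "p ^ N dvd binom_pair T (a div d) (b div d)"
      using prime_power_dvd_binom_pair[OF p _ _ T] prime_power_dvd_div_add_div[OF p pN d] by blast
    then show ?thesis unfolding signed_binom_pair_def by (metis dvd_mult of_nat_dvd_iff)
  qed simp
  then show ?thesis unfolding moebius_binom_sum_def by (auto intro!: dvd_sum)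
qed

lemma dvd_moebius_binom_sum:
  assumes "0 < a" "2 \<le> T"
  shows "int (a + b) dvd moebius_binom_sum T a b"
proof (cases "moebius_binom_sum T a b = 0")
  case False
  have "a + b dvd nat \<bar>moebius_binom_sum T a b\<bar>"
  proof (rule multiplicity_le_imp_dvd)
    show "a + b \<noteq> 0" using assms by simp
    fix q :: nat assume q: "prime q"
    have "int (q ^ multiplicity q (a + b)) dvd moebius_binom_sum T a b"
      using prime_power_dvd_moebius_binom_sum[OF q multiplicity_dvd assms] .
    then have "q ^ multiplicity q (a + b) dvd nat \<bar>moebius_binom_sum T a b\<bar>" by simp
    then show "multiplicity q (a + b) \<le> multiplicity q (nat \<bar>moebius_binom_sum T a b\<bar>)"
      using False q by (intro multiplicity_geI) (auto simp: not_prime_unit)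
  qed
  then show ?thesis by simp
qed simp


section \<open>Extension to integer \<open>t\<close>\<close>

lemma binom_pair_swap:
  assumes a0: "0 < a" and b0: "0 < b" and T: "1 \<le> T"
  shows "(a * T choose a) * (b * T - 1 choose b) = binom_pair T a b"
proof -
  have h1: "(a * T - a) * (a * T choose a) = a * T * (a * T - 1 choose a)"
    by (rule binomial_absorb_comp)
  have h2: "(b * T - b) * (b * T choose b) = b * T * (b * T - 1 choose b)"
    by (rule binomial_absorb_comp)
  have e: "a * T * (b * T - b) = (a * T - a) * (b * T)"
    by (simp add: diff_mult_distrib2 diff_mult_distrib algebra_simps)
  have "(a * T * (b * T)) * ((a * T choose a) * (b * T - 1 choose b))
      = (a * T choose a) * (a * T) * (b * T * (b * T - 1 choose b))" by (simp add: ac_simps)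
  also have "\<dots> = (a * T choose a) * (a * T * (b * T - b)) * (b * T choose b)"
    unfolding h2[symmetric] by (simp add: ac_simps)
  also have "\<dots> = ((a * T - a) * (a * T choose a)) * (b * T) * (b * T choose b)"
    unfolding e by (simp add: ac_simps)
  also have "\<dots> = (a * T * (b * T)) * binom_pair T a b"
    unfolding h1 binom_pair_def by (simp add: ac_simps)
  finally show ?thesis using a0 b0 T by simp
qed

lemma power_int_neg_one_diff: "(-1::rat) powi (int m - int n) = (-1) ^ (m + n)"
proof -
  have "(-1::rat) powi (int m + - int n) = (-1) powi (int m) * (-1) powi (- int n)"
    by (rule power_int_add) simp
  then have "(-1::rat) powi (int m - int n) = (-1) powi (int m) * (-1) powi (- int n)"
    by simp
  also have "\<dots> = (-1) ^ m * (-1) ^ n" by (simp add: power_int_minus_one_minus)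
  finally show ?thesis by (simp add: power_add)
qed

text \<open>The summand of the theorem for the divisor \<open>d\<close>, with \<open>a = m\<^sub>1 / d\<close>, \<open>b = m\<^sub>2 / d\<close>
  and \<open>t = \<tau> + 1\<close>.\<close>

definition gbinom_pair :: "nat \<Rightarrow> nat \<Rightarrow> int \<Rightarrow> rat" where
  "gbinom_pair a b t =
     (-1) powi (int (a + b) * t) * (of_int (int a * t - 1) gchoose a) * (of_int (int b * t) gchoose b)"

lemma gbinom_pair_ge_2:
  assumes a0: "0 < a" and t: "2 \<le> t"
  shows "gbinom_pair a b t = of_int (signed_binom_pair (nat t) a b)"
proof -
  define T where "T = nat t"
  have tT: "t = int T" unfolding T_def using t by simp
  have aT: "1 \<le> a * T" using a0 t tT by (simp add: Suc_le_eq)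
  have x: "(of_int (int a * t - 1) :: rat) = of_nat (a * T - 1)" "(of_int (int b * t) :: rat) = of_nat (b * T)"
    "int (a + b) * t = int ((a + b) * T)"
    unfolding tT using aT by (simp_all add: of_nat_diff)
  show ?thesis
    unfolding gbinom_pair_def signed_binom_pair_def x T_def[symmetric] binom_pair_def power_int_of_nat
      binomial_gbinomial[symmetric]
    by simp
qed

lemma gbinomial_of_int_reflect:
  assumes "x < int k"
  shows "(of_int x gchoose k :: 'a :: field_char_0) = (-1) ^ k * of_nat (nat (int k - x - 1) choose k)"
proof -
  have "int (nat (int k - x - 1)) = int k - x - 1" using assms by simp
  then have "(of_nat (nat (int k - x - 1)) :: 'a) = of_int (int k - x - 1)" by (metis of_int_of_nat_eq)
  then have "(of_nat k - of_int x - 1 :: 'a) = of_nat (nat (int k - x - 1))" by simp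
  then show ?thesis using gbinomial_negated_upper[of "of_int x :: 'a" k]
    by (simp add: binomial_gbinomial)
qed

lemma gbinom_pair_le_neg_1:
  assumes a0: "0 < a" and b0: "0 < b" and t: "t \<le> -1"
  shows "gbinom_pair a b t = of_int (signed_binom_pair (nat (1 - t)) a b)"
proof -
  define T where "T = nat (1 - t)"
  have tT: "t = 1 - int T" and T2: "2 \<le> T" unfolding T_def using t by simp_all
  have n: "nat (int a - (int a * t - 1) - 1) = a * T" "nat (int b - int b * t - 1) = b * T - 1"
    using b0 T2 unfolding tT by (simp_all add: algebra_simps nat_diff_distrib' nat_mult_distrib)
  have "int a * t \<le> 0" "int b * t \<le> 0" using t by (simp_all add: mult_nonneg_nonpos)
  then have "int a * t - 1 < int a" "int b * t < int b" using b0 by linarith+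
  then have g: "(of_int (int a * t - 1) gchoose a :: rat) = (-1) ^ a * of_nat (a * T choose a)"
               "(of_int (int b * t) gchoose b :: rat) = (-1) ^ b * of_nat (b * T - 1 choose b)"
    by (simp_all only: gbinomial_of_int_reflect n)
  have "int (a + b) * t = int (a + b) - int ((a + b) * T)" unfolding tT by (simp add: algebra_simps)
  then have "(-1::rat) powi (int (a + b) * t) * (-1) ^ a * (-1) ^ b
           = (-1) ^ ((a + b) * T) * ((-1) ^ (a + b) * (-1) ^ (a + b))"
    by (simp only: power_int_neg_one_diff) (simp add: power_add ac_simps)
  also have "(-1::rat) ^ (a + b) * (-1) ^ (a + b) = 1" by (simp flip: power_add)
  finally have "(-1::rat) powi (int (a + b) * t) * (-1) ^ a * (-1) ^ b = (-1) ^ ((a + b) * T)"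
    by simp
  then have "gbinom_pair a b t = (-1) ^ ((a + b) * T) * of_nat ((a * T choose a) * (b * T - 1 choose b))"
    unfolding gbinom_pair_def g by (simp add: ac_simps)
  moreover have "(a * T choose a) * (b * T - 1 choose b) = binom_pair T a b"
    using T2 by (intro binom_pair_swap[OF a0 b0]) simp
  ultimately show ?thesis unfolding signed_binom_pair_def T_def[symmetric] by (simp flip: of_nat_mult)
qed

lemma gbinom_pair_0_1:
  assumes a0: "0 < a" and b0: "0 < b" and t: "t = 0 \<or> t = 1"
  shows "gbinom_pair a b t = 0"
  using t
proof
  assume t0: "t = 0"
  have "(of_int (int b * t) gchoose b :: rat) = 0"
    unfolding t0 using b0 by (simp add: gbinomial_0_left)
  then show ?thesis unfolding gbinom_pair_def by (simp only: mult_zero_right)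
next
  assume t1: "t = 1"
  have e: "(of_int (int a * t - 1) :: rat) = of_nat (a - 1)" unfolding t1 using a0 by (simp add: of_nat_diff)
  have "(of_nat (a - 1) gchoose a :: rat) = of_nat (a - 1 choose a)" by (rule binomial_gbinomial[symmetric])
  also have "(a - 1 choose a) = 0" using a0 by simp
  finally have "(of_int (int a * t - 1) gchoose a :: rat) = 0" unfolding e by simp
  then show ?thesis unfolding gbinom_pair_def by (simp only: mult_zero_right mult_zero_left)
qed

lemma moebius_gbinom_sum_eq:
  assumes "\<And>d. d dvd a \<Longrightarrow> d dvd b \<Longrightarrow>
             gbinom_pair (a div d) (b div d) t = of_int (signed_binom_pair T (a div d) (b div d))"
  shows "(\<Sum>d | d dvd a \<and> d dvd b. of_int (moebius_mu d) * gbinom_pair (a div d) (b div d) t)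
       = of_int (moebius_binom_sum T a b)"
  unfolding moebius_binom_sum_def of_int_sum of_int_mult using assms by (intro sum.cong) auto

lemma moebius_gbinom_sum_in_Ints:
  assumes a0: "0 < a" and b0: "0 < b"
  shows "(1 / of_nat (a + b))
           * (\<Sum>d | d dvd a \<and> d dvd b. of_int (moebius_mu d) * gbinom_pair (a div d) (b div d) t)
         \<in> (\<int> :: rat set)"
proof -
  have pos: "0 < a div d" "0 < b div d" if "d dvd a" "d dvd b" for d
    using that a0 b0 by (auto simp: dvd_div_eq_0_iff intro!: Nat.gr0I)
  have "\<exists>T. 2 \<le> T \<and> (\<Sum>d | d dvd a \<and> d dvd b. of_int (moebius_mu d) * gbinom_pair (a div d) (b div d) t)
                      = (of_int (moebius_binom_sum T a b) :: rat)"
    if "t \<noteq> 0" "t \<noteq> 1"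
  proof (cases "2 \<le> t")
    case True
    then show ?thesis
      using gbinom_pair_ge_2[OF pos(1)] by (intro exI[of _ "nat t"] conjI moebius_gbinom_sum_eq) auto
  next
    case False
    then have "t \<le> -1" using that by linarith
    then show ?thesis
      using gbinom_pair_le_neg_1[OF pos]
      by (intro exI[of _ "nat (1 - t)"] conjI moebius_gbinom_sum_eq) auto
  qed
  then consider T where "2 \<le> T"
      "(\<Sum>d | d dvd a \<and> d dvd b. of_int (moebius_mu d) * gbinom_pair (a div d) (b div d) t)
       = (of_int (moebius_binom_sum T a b) :: rat)"
    | "t = 0 \<or> t = 1" by blast
  then show ?thesis
  proof cases
    case (1 T)
    then obtain k where "moebius_binom_sum T a b = int (a + b) * k"
      using dvd_moebius_binom_sum[OF a0] by blast
    then show ?thesis unfolding 1(2) using a0 by simp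
  next
    case 2
    then show ?thesis using gbinom_pair_0_1[OF pos] by (simp add: sum.neutral)
  qed
qed

lemma summand_eq_gbinom_pair:
  fixes m1 m2 d :: nat and \<tau> :: int
  assumes "d dvd m1" "d dvd m2" "0 < d"
  shows "(-1::rat) powi ((int (m1 + m2) * (\<tau> + 1)) div int d)
           * (of_int ((int m1 * \<tau> + int m1) div int d - 1) gchoose (m1 div d))
           * (of_int ((int m2 * \<tau> + int m2) div int d) gchoose (m2 div d))
         = gbinom_pair (m1 div d) (m2 div d) (\<tau> + 1)"
proof -
  obtain a b where ab: "m1 = d * a" "m2 = d * b" using assms(1,2) by (elim dvdE)
  have "int (m1 + m2) * (\<tau> + 1) = int d * (int (a + b) * (\<tau> + 1))"
       "int m1 * \<tau> + int m1 = int d * (int a * (\<tau> + 1))"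
       "int m2 * \<tau> + int m2 = int d * (int b * (\<tau> + 1))"
    unfolding ab by (simp_all add: algebra_simps)
  moreover have "m1 div d = a" "m2 div d = b" using ab assms(3) by simp_all
  ultimately show ?thesis
    unfolding gbinom_pair_def using assms(3)
    by (simp only: nonzero_mult_div_cancel_left of_nat_eq_0_iff neq0_conv)
qed

theorem theorem4p10:
  fixes m1 m2 :: nat and \<tau> :: int
  assumes "m1 \<ge> 1" and "m2 \<ge> 1"
  shows "(1 / of_nat (m1 + m2)) *
           (\<Sum>d\<in>{d::nat. d dvd m1 \<and> d dvd m2}.
              of_int (moebius_mu d)
              * ((-1::rat) powi ((int (m1 + m2) * (\<tau> + 1)) div int d))
              * ((of_int ((int m1 * \<tau> + int m1) div int d - 1)) gchoose (m1 div d))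
              * ((of_int ((int m2 * \<tau> + int m2) div int d)) gchoose (m2 div d)))
         \<in> (\<int> :: rat set)"
proof -
  have summand: "of_int (moebius_mu d)
              * ((-1::rat) powi ((int (m1 + m2) * (\<tau> + 1)) div int d))
              * ((of_int ((int m1 * \<tau> + int m1) div int d - 1)) gchoose (m1 div d))
              * ((of_int ((int m2 * \<tau> + int m2) div int d)) gchoose (m2 div d))
        = of_int (moebius_mu d) * gbinom_pair (m1 div d) (m2 div d) (\<tau> + 1)"
    if "d \<in> {d. d dvd m1 \<and> d dvd m2}" for d
  proof -
    have "d dvd m1" "d dvd m2" "0 < d" using that assms by (auto intro: gr0I)
    then show ?thesis using summand_eq_gbinom_pair by (simp only: mult.assoc)
  qed
  have "(1 / of_nat (m1 + m2)) * (\<Sum>d | d dvd m1 \<and> d dvd m2.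
          of_int (moebius_mu d) * gbinom_pair (m1 div d) (m2 div d) (\<tau> + 1)) \<in> (\<int> :: rat set)"
    using assms by (intro moebius_gbinom_sum_in_Ints) auto
  then show ?thesis by (subst sum.cong[OF refl summand]) auto
qed

end
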